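(* Let $Q=\operatorname{diag}(\lambda_1,\lambda_2,\lambda_3)$ with $-\tfrac13<\lambda_1\le\lambda_2\le\lambda_3<\tfrac23$ and $\lambda_1+\lambda_2+\lambda_3=0$, and let $\mu_1,\mu_2,\mu_3$ be the Lagrange multipliers of its optimal density $\rho_Q$. Then $\mu_1\le\mu_2\le\mu_3$, and $\mu_i=\mu_j$ whenever $\lambda_i=\lambda_j$ ($1\le i\ne j\le 3$).
   Context: Points of the unit sphere $\mathbb S^2$ are written $(x,y,z)$, and $\mathrm dS$ is surface measure. For a physical $Q$ (symmetric traceless with all eigenvalues in $(-\tfrac13,\tfrac23)$) the Ball–Majumdar potential is $f(Q)=\inf\int_{\mathbb S^2}\rho\ln\rho\,\mathrm dS$ over even probability densities $\rho$ with $\int(\mathbf n\otimes\mathbf n-\tfrac13I_3)\rho\,\mathrm dS=Q$. For diagonal physical $Q=\operatorname{diag}(\lambda_1,\lambda_2,\lambda_3)$ this infimum is attained by the density $\rho_Q(x,y,z)=\exp(\mu_1x^2+\mu_2y^2+\mu_3z^2)/Z$, $Z=\int_{\mathbb S^2}\exp(\mu_1x^2+\mu_2y^2+\mu_3z^2)\,\mathrm dS$, where the real numbers $\mu_1,\mu_2,\mu_3$ (the Lagrange multipliers) satisfy $\mu_1+\mu_2+\mu_3=0$ and $\frac1Z\frac{\partial Z}{\partial\mu_i}=\lambda_i+\tfrac13$, i.e. $\int x^2\rho_Q\,\mathrm dS=\lambda_1+\tfrac13$, $\int y^2\rho_Q\,\mathrm dS=\lambda_2+\tfrac13$, $\int z^2\rho_Q\,\mathrm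 dS=\lambda_3+\tfrac13$. *)

theory Defs
  imports "HOL-Analysis.Analysis"
begin

text \<open>Integral over the unit sphere S^2 with respect to surface measure dS,
  written in spherical coordinates (x,y,z) = (sin t cos p, sin t sin p, cos t),
  dS = sin t dt dp, t in [0,pi], p in [0,2 pi].\<close>
definition sphere_integral :: "(real \<Rightarrow> real \<Rightarrow> real \<Rightarrow> real) \<Rightarrow> real" where
  "sphere_integral g =
     (LBINT p=0..2*pi. (LBINT t=0..pi. g (sin t * cos p) (sin t * sin p) (cos t) * sin t))"

definition partition_Z :: "real \<Rightarrow> real \<Rightarrow> real \<Rightarrow> real" where
  "partition_Z m1 m2 m3 = sphere_integral (\<lambda>x y z. exp (m1 * x^2 + m2 * y^2 + m3 * z^2))"

definition rhoQ :: "real \<Rightarrow> real \<Rightarrow> real \<Rightarrow> real \<Rightarrow> real \<Rightarrow> real \<Rightarrow> real" where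
  "rhoQ m1 m2 m3 x y z = exp (m1 * x^2 + m2 * y^2 + m3 * z^2) / partition_Z m1 m2 m3"

end

(*
  Rotations about a coordinate axis preserve the surface measure of the sphere, so the
  integral of the derivative of a smooth function along such a rotation vanishes.  For the
  rotation x d/dy - y d/dx applied to x y w, where w = exp (mu1 x^2 + mu2 y^2 + mu3 z^2) is the
  Gibbs weight, this gives  int (x^2 - y^2) w = 2 (mu1 - mu2) int x^2 y^2 w,  and the rotation
  about the x-axis applied to y z w gives the analogous identity for y and z.  Dividing by Z,
  lambda1 - lambda2 and lambda2 - lambda3 are positive multiples of mu1 - mu2 and mu2 - mu3,
  which yields the ordering of the multipliers and their equality in the degenerate cases.
*)

theory Submission
  imports Defs
begin

definition continuous3 :: "(real \<Rightarrow> real \<Rightarrow> real \<Rightarrow> real) \<Rightarrow> bool" where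
  "continuous3 g \<longleftrightarrow> continuous_on UNIV (\<lambda>(x, y, z). g x y z)"

definition has_continuous_partials ::
    "(real \<Rightarrow> real \<Rightarrow> real \<Rightarrow> real) \<Rightarrow> (real \<Rightarrow> real \<Rightarrow> real \<Rightarrow> real) \<Rightarrow>
     (real \<Rightarrow> real \<Rightarrow> real \<Rightarrow> real) \<Rightarrow> (real \<Rightarrow> real \<Rightarrow> real \<Rightarrow> real) \<Rightarrow> bool" where
  "has_continuous_partials f fx fy fz \<longleftrightarrow>
     (\<forall>x y z. ((\<lambda>(x, y, z). f x y z) has_derivative
        (\<lambda>(u, v, w). fx x y z * u + fy x y z * v + fz x y z * w)) (at (x, y, z)))
     \<and> continuous3 fx \<and> continuous3 fy \<and> continuous3 fz"

lemma has_continuous_partials_imp_continuous3: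
  assumes "has_continuous_partials f fx fy fz"
  shows "continuous3 f"
  using assms unfolding has_continuous_partials_def continuous3_def
  by (intro continuous_at_imp_continuous_on ballI) (auto intro: has_derivative_continuous)

lemma has_real_derivative_along_curve:
  assumes "((\<lambda>(x, y, z). f x y z) has_derivative (\<lambda>(u, v, w). fx * u + fy * v + fz * w)) (at (X s, Y s, Z s))"
    and "(X has_real_derivative dX) (at s)" "(Y has_real_derivative dY) (at s)" "(Z has_real_derivative dZ) (at s)"
  shows "((\<lambda>s. f (X s) (Y s) (Z s)) has_real_derivative fx * dX + fy * dY + fz * dZ) (at s)"
proof -
  have "((\<lambda>s. (X s, Y s, Z s)) has_derivative (\<lambda>h. (dX * h, dY * h, dZ * h))) (at s)"
    using assms(2-4) unfolding has_field_derivative_def by (intro has_derivative_Pair)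
  from has_derivative_compose[OF this assms(1)]
  have "((\<lambda>s. f (X s) (Y s) (Z s)) has_derivative (\<lambda>h. fx * (dX * h) + fy * (dY * h) + fz * (dZ * h))) (at s)"
    by simp
  then show ?thesis
    unfolding has_field_derivative_def by (rule has_derivative_eq_rhs) (simp add: fun_eq_iff algebra_simps)
qed

lemma integral_cbox_divergence_eq_0:
  fixes A B At Bp :: "real \<Rightarrow> real \<Rightarrow> real"
  assumes "a \<le> b" "c \<le> d"
    and At_cont: "continuous_on (cbox (a, c) (b, d)) (\<lambda>(p, t). At p t)"
    and Bp_cont: "continuous_on (cbox (a, c) (b, d)) (\<lambda>(p, t). Bp p t)"
    and A_deriv: "\<And>p t. p \<in> {a..b} \<Longrightarrow> t \<in> {c..d} \<Longrightarrow> (A p has_real_derivative At p t) (at t within {c..d})"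
    and B_deriv: "\<And>p t. p \<in> {a..b} \<Longrightarrow> t \<in> {c..d} \<Longrightarrow> ((\<lambda>p. B p t) has_real_derivative Bp p t) (at p within {a..b})"
    and A_bd: "\<And>p. A p c = A p d" and B_bd: "\<And>t. B a t = B b t"
  shows "integral (cbox (a, c) (b, d)) (\<lambda>(p, t). At p t + Bp p t) = 0"
proof -
  have A_int: "integral {c..d} (At p) = 0" if "p \<in> {a..b}" for p
  proof -
    have "(At p has_integral (A p d - A p c)) {c..d}"
      by (rule fundamental_theorem_of_calculus[OF assms(2)])
        (use A_deriv[OF that] in \<open>simp add: has_real_derivative_iff_has_vector_derivative\<close>)
    then show ?thesis using A_bd by (simp add: integral_unique)
  qed
  have B_int: "integral {a..b} (\<lambda>p. Bp p t) = 0" if "t \<in> {c..d}" for t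
  proof -
    have "((\<lambda>p. Bp p t) has_integral (B b t - B a t)) {a..b}"
      by (rule fundamental_theorem_of_calculus[OF assms(1)])
        (use B_deriv[OF _ that] in \<open>simp add: has_real_derivative_iff_has_vector_derivative\<close>)
    then show ?thesis using B_bd by (simp add: integral_unique)
  qed
  have "integral (cbox (a, c) (b, d)) (\<lambda>(p, t). At p t + Bp p t)
      = integral (cbox (a, c) (b, d)) (\<lambda>(p, t). At p t) + integral (cbox (a, c) (b, d)) (\<lambda>(p, t). Bp p t)"
    using integral_add[OF integrable_continuous[OF At_cont] integrable_continuous[OF Bp_cont]]
    by (simp add: split_beta')
  also have "integral (cbox (a, c) (b, d)) (\<lambda>(p, t). At p t) = integral {a..b} (\<lambda>p. integral {c..d} (At p))"
    using integral_prod_continuous[OF At_cont] by simp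
  also have "\<dots> = integral {a..b} (\<lambda>p. 0)"
    by (rule integral_cong) (rule A_int)
  also have "integral (cbox (a, c) (b, d)) (\<lambda>(p, t). Bp p t) = integral {c..d} (\<lambda>t. integral {a..b} (\<lambda>p. Bp p t))"
    using integral_prod_continuous[OF Bp_cont] integral_swap_continuous[OF Bp_cont] by simp
  also have "\<dots> = integral {c..d} (\<lambda>t. 0)"
    by (rule integral_cong) (rule B_int)
  finally show ?thesis by simp
qed

lemma continuous3_spherical:
  assumes "continuous3 g"
  shows "continuous_on S (\<lambda>v. g (sin (snd v) * cos (fst v)) (sin (snd v) * sin (fst v)) (cos (snd v)))"
proof -
  have "continuous_on UNIV (\<lambda>v. (\<lambda>(x, y, z). g x y z) (sin (snd v) * cos (fst v), sin (snd v) * sin (fst v), cos (snd v)))"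
    by (rule continuous_on_compose2[OF assms[unfolded continuous3_def]]) (auto intro!: continuous_intros)
  then show ?thesis
    by (auto intro: continuous_on_subset)
qed

lemma continuous_on_spherical_integrand:
  assumes "continuous3 g"
  shows "continuous_on S (\<lambda>(p, t). g (sin t * cos p) (sin t * sin p) (cos t) * sin t)"
  unfolding split_beta' by (intro continuous_intros continuous3_spherical assms)

lemma has_real_derivative_spherical_azimuth:
  assumes "has_continuous_partials f fx fy fz"
  shows "((\<lambda>p. f (sin t * cos p) (sin t * sin p) (cos t)) has_real_derivative
    sin t * cos p * fy (sin t * cos p) (sin t * sin p) (cos t)
    - sin t * sin p * fx (sin t * cos p) (sin t * sin p) (cos t)) (at p)"
proof -
  have "((\<lambda>p. sin t * cos p) has_real_derivative - (sin t * sin p)) (at p)"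
    by (auto intro!: derivative_eq_intros)
  moreover have "((\<lambda>p. sin t * sin p) has_real_derivative sin t * cos p) (at p)"
    by (auto intro!: derivative_eq_intros)
  moreover have "((\<lambda>p. cos t) has_real_derivative 0) (at p)"
    by simp
  ultimately have "((\<lambda>p. f (sin t * cos p) (sin t * sin p) (cos t)) has_real_derivative
      fx (sin t * cos p) (sin t * sin p) (cos t) * - (sin t * sin p)
      + fy (sin t * cos p) (sin t * sin p) (cos t) * (sin t * cos p)
      + fz (sin t * cos p) (sin t * sin p) (cos t) * 0) (at p)"
    using assms unfolding has_continuous_partials_def by (intro has_real_derivative_along_curve) auto
  then show ?thesis
    by (rule DERIV_cong) (simp add: algebra_simps)
qed

lemma has_real_derivative_spherical_polar:
  assumes "has_continuous_partials f fx fy fz"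
  shows "((\<lambda>t. f (sin t * cos p) (sin t * sin p) (cos t)) has_real_derivative
    cos t * cos p * fx (sin t * cos p) (sin t * sin p) (cos t)
    + cos t * sin p * fy (sin t * cos p) (sin t * sin p) (cos t)
    - sin t * fz (sin t * cos p) (sin t * sin p) (cos t)) (at t)"
proof -
  have "((\<lambda>t. sin t * cos p) has_real_derivative cos t * cos p) (at t)"
    by (auto intro!: derivative_eq_intros)
  moreover have "((\<lambda>t. sin t * sin p) has_real_derivative cos t * sin p) (at t)"
    by (auto intro!: derivative_eq_intros)
  moreover have "(cos has_real_derivative - sin t) (at t)"
    by (rule DERIV_cos)
  ultimately have "((\<lambda>t. f (sin t * cos p) (sin t * sin p) (cos t)) has_real_derivative
      fx (sin t * cos p) (sin t * sin p) (cos t) * (cos t * cos p)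
      + fy (sin t * cos p) (sin t * sin p) (cos t) * (cos t * sin p)
      + fz (sin t * cos p) (sin t * sin p) (cos t) * - sin t) (at t)"
    using assms unfolding has_continuous_partials_def by (intro has_real_derivative_along_curve) auto
  then show ?thesis
    by (rule DERIV_cong) (simp add: algebra_simps)
qed

lemma sphere_integral_eq_integral:
  assumes "continuous3 g"
  shows "sphere_integral g =
    integral (cbox (0, 0) (2*pi, pi)) (\<lambda>(p, t). g (sin t * cos p) (sin t * sin p) (cos t) * sin t)"
proof -
  define G where "G = (\<lambda>(p, t). g (sin t * cos p) (sin t * sin p) (cos t) * sin t)"
  have G: "continuous_on S G" for S
    unfolding G_def by (rule continuous_on_spherical_integrand[OF assms])
  have inner: "(LBINT t=0..pi. G (p, t)) = integral {0..pi} (\<lambda>t. G (p, t))" for p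
    unfolding zero_ereal_def
    by (rule interval_integral_eq_integral) (auto intro!: borel_integrable_atLeastAtMost' continuous_on_compose2[OF G] continuous_intros)
  have outer_cont: "continuous_on UNIV (\<lambda>p. integral (cbox 0 pi) (\<lambda>t. G (p, t)))"
    using G by (intro integral_continuous_on_param) (simp add: split_beta')
  have "sphere_integral g = (LBINT p=0..2*pi. integral {0..pi} (\<lambda>t. G (p, t)))"
    unfolding sphere_integral_def inner[symmetric] by (simp add: G_def)
  also have "\<dots> = integral {0..2*pi} (\<lambda>p. integral {0..pi} (\<lambda>t. G (p, t)))"
    unfolding zero_ereal_def
    by (rule interval_integral_eq_integral) (use outer_cont in \<open>auto intro!: borel_integrable_atLeastAtMost' intro: continuous_on_subset\<close>)
  also have "\<dots> = integral (cbox (0, 0) (2*pi, pi)) G"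
    by (subst integral_prod_continuous) (auto intro: G)
  finally show ?thesis unfolding G_def .
qed

lemma sphere_integral_cmult: "sphere_integral (\<lambda>x y z. c * g x y z) = c * sphere_integral g"
  unfolding sphere_integral_def by (simp add: mult.assoc)

lemma sphere_integral_add:
  assumes "continuous3 g" "continuous3 h"
  shows "sphere_integral (\<lambda>x y z. g x y z + h x y z) = sphere_integral g + sphere_integral h"
proof -
  let ?R = "cbox (0, 0) (2*pi, pi)"
  define G where "G = (\<lambda>(p, t). g (sin t * cos p) (sin t * sin p) (cos t) * sin t)"
  define H where "H = (\<lambda>(p, t). h (sin t * cos p) (sin t * sin p) (cos t) * sin t)"
  have "continuous3 (\<lambda>x y z. g x y z + h x y z)"
    using assms unfolding continuous3_def split_beta' by (intro continuous_intros)
  then have "sphere_integral (\<lambda>x y z. g x y z + h x y z) = integral ?R (\<lambda>v. G v + H v)"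
    by (simp add: sphere_integral_eq_integral G_def H_def split_beta' distrib_right)
  also have "\<dots> = integral ?R G + integral ?R H"
    unfolding G_def H_def
    by (intro integral_add integrable_continuous continuous_on_spherical_integrand assms)
  finally show ?thesis
    by (simp add: sphere_integral_eq_integral assms G_def H_def)
qed

lemma sphere_integral_diff:
  assumes "continuous3 g" "continuous3 h"
  shows "sphere_integral (\<lambda>x y z. g x y z - h x y z) = sphere_integral g - sphere_integral h"
proof -
  have "continuous3 (\<lambda>x y z. (- 1) * h x y z)"
    using assms unfolding continuous3_def split_beta' by (intro continuous_intros)
  from sphere_integral_add[OF assms(1) this] show ?thesis
    using sphere_integral_cmult[of "- 1" h] by simp
qed

lemma sphere_integral_pos:
  assumes "continuous3 g" and nonneg: "\<And>x y z. x\<^sup>2 + y\<^sup>2 + z\<^sup>2 = 1 \<Longrightarrow> 0 \<le> g x y z"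
    and "0 \<le> p" "p \<le> 2*pi" "0 < t" "t < pi"
    and pos: "0 < g (sin t * cos p) (sin t * sin p) (cos t)"
  shows "0 < sphere_integral g"
proof -
  define G where "G = (\<lambda>(p, t). g (sin t * cos p) (sin t * sin p) (cos t) * sin t)"
  have G_cont: "continuous_on (cbox (0, 0) (2*pi, pi)) G"
    unfolding G_def by (rule continuous_on_spherical_integrand[OF assms(1)])
  have G_nonneg: "0 \<le> G v" if "v \<in> cbox (0, 0) (2*pi, pi)" for v
  proof (cases v)
    case (Pair q s)
    have "(sin s * cos q)\<^sup>2 + (sin s * sin q)\<^sup>2 + (cos s)\<^sup>2 = 1"
      by (simp add: power_mult_distrib flip: distrib_left)
    moreover have "0 \<le> sin s"
      using that Pair by (intro sin_ge_zero) (auto simp: cbox_Pair_iff)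
    ultimately show ?thesis
      using nonneg Pair by (simp add: G_def)
  qed
  have "0 < G (p, t)"
    using pos assms(5,6) by (simp add: G_def sin_gt_zero)
  moreover have "(p, t) \<in> cbox (0, 0) (2*pi, pi)"
    using assms(3-6) by (simp add: cbox_Pair_iff)
  moreover have "box (0, 0) (2*pi, pi) \<noteq> {}"
    by (simp add: box_prod not_le)
  ultimately have "integral (cbox (0, 0) (2*pi, pi)) G \<noteq> 0"
  proof (intro notI)
    assume "integral (cbox (0, 0) (2*pi, pi)) G = 0"
    then have "(G has_integral 0) (cbox (0, 0) (2*pi, pi))"
      using integrable_integral[OF integrable_continuous[OF G_cont]] by simp
    from has_integral_0_cbox_imp_0[OF G_cont G_nonneg[OF subsetD[OF box_subset_cbox]] this]
    show False
      using \<open>0 < G (p, t)\<close> \<open>(p, t) \<in> cbox (0, 0) (2*pi, pi)\<close> \<open>box (0, 0) (2*pi, pi) \<noteq> {}\<close> by force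
  qed
  moreover have "0 \<le> integral (cbox (0, 0) (2*pi, pi)) G"
    using G_nonneg by (intro integral_nonneg integrable_continuous[OF G_cont]) auto
  ultimately show ?thesis
    unfolding sphere_integral_eq_integral[OF assms(1)] G_def by linarith
qed

lemma sphere_integral_rotation_z_eq_0:
  assumes "has_continuous_partials f fx fy fz"
  shows "sphere_integral (\<lambda>x y z. x * fy x y z - y * fx x y z) = 0"
proof -
  define R where "R = (\<lambda>x y z. x * fy x y z - y * fx x y z)"
  define B where "B = (\<lambda>p t. f (sin t * cos p) (sin t * sin p) (cos t) * sin t)"
  have "continuous3 R"
    using assms unfolding has_continuous_partials_def continuous3_def R_def split_beta'
    by (intro continuous_intros) auto
  have "sphere_integral R = integral (cbox (0, 0) (2*pi, pi))
      (\<lambda>(p, t). 0 + R (sin t * cos p) (sin t * sin p) (cos t) * sin t)"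
    by (simp add: sphere_integral_eq_integral[OF \<open>continuous3 R\<close>])
  also have "\<dots> = 0"
  proof (rule integral_cbox_divergence_eq_0[where A = "\<lambda>p t. 0" and B = B])
    show "continuous_on (cbox (0, 0) (2*pi, pi)) (\<lambda>(p, t). R (sin t * cos p) (sin t * sin p) (cos t) * sin t)"
      by (rule continuous_on_spherical_integrand[OF \<open>continuous3 R\<close>])
    show "((\<lambda>p. B p t) has_real_derivative R (sin t * cos p) (sin t * sin p) (cos t) * sin t)
        (at p within {0..2*pi})" for p t
      unfolding B_def R_def
      by (rule has_field_derivative_at_within, rule DERIV_cmult_right,
          rule has_real_derivative_spherical_azimuth[OF assms])
  qed (auto simp: B_def)
  finally show ?thesis unfolding R_def .
qed

lemma sphere_integral_rotation_x_eq_0: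
  assumes "has_continuous_partials f fx fy fz"
  shows "sphere_integral (\<lambda>x y z. y * fz x y z - z * fy x y z) = 0"
proof -
  define R where "R = (\<lambda>x y z. y * fz x y z - z * fy x y z)"
  define F where "F = (\<lambda>p t. f (sin t * cos p) (sin t * sin p) (cos t))"
  define Fx where "Fx = (\<lambda>p t. fx (sin t * cos p) (sin t * sin p) (cos t))"
  define Fy where "Fy = (\<lambda>p t. fy (sin t * cos p) (sin t * sin p) (cos t))"
  define Fz where "Fz = (\<lambda>p t. fz (sin t * cos p) (sin t * sin p) (cos t))"
  \<comment> \<open>In spherical coordinates the rotation field (0, -z, y) is -sin p d/dt - cot t cos p d/dp;
    times the area element sin t it is the divergence of (-sin p sin t F, -cos t cos p F).\<close>
  define At where "At = (\<lambda>p t. - (sin p * cos t) * F p t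
      + (cos t * cos p * Fx p t + cos t * sin p * Fy p t - sin t * Fz p t) * - (sin p * sin t))"
  define Bp where "Bp = (\<lambda>p t. cos t * sin p * F p t
      + (sin t * cos p * Fy p t - sin t * sin p * Fx p t) * - (cos t * cos p))"
  have cont: "continuous3 f" "continuous3 fx" "continuous3 fy" "continuous3 fz"
    using has_continuous_partials_imp_continuous3[OF assms] assms
    unfolding has_continuous_partials_def by blast+
  have F_cont: "continuous_on S (\<lambda>v. F (fst v) (snd v))" "continuous_on S (\<lambda>v. Fx (fst v) (snd v))"
      "continuous_on S (\<lambda>v. Fy (fst v) (snd v))" "continuous_on S (\<lambda>v. Fz (fst v) (snd v))" for S
    unfolding F_def Fx_def Fy_def Fz_def by (intro continuous3_spherical cont)+
  have "continuous3 R"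
    using cont unfolding continuous3_def R_def split_beta' by (intro continuous_intros)
  have integrand: "R (sin t * cos p) (sin t * sin p) (cos t) * sin t = At p t + Bp p t" for p t
  proof -
    have "(sin p)\<^sup>2 + (cos p)\<^sup>2 = 1" by simp
    then show ?thesis
      unfolding R_def At_def Bp_def Fx_def Fy_def Fz_def by algebra
  qed
  have "sphere_integral R = integral (cbox (0, 0) (2*pi, pi)) (\<lambda>(p, t). At p t + Bp p t)"
    by (simp add: sphere_integral_eq_integral[OF \<open>continuous3 R\<close>] integrand)
  also have "\<dots> = 0"
  proof (rule integral_cbox_divergence_eq_0[where A = "\<lambda>p t. - (sin p * sin t) * F p t"
        and B = "\<lambda>p t. - (cos t * cos p) * F p t"])
    show "continuous_on (cbox (0, 0) (2*pi, pi)) (\<lambda>(p, t). At p t)"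
      "continuous_on (cbox (0, 0) (2*pi, pi)) (\<lambda>(p, t). Bp p t)"
      unfolding At_def Bp_def split_beta' by (intro continuous_intros F_cont)+
    show "((\<lambda>t. - (sin p * sin t) * F p t) has_real_derivative At p t) (at t within {0..pi})" for p t
    proof -
      have "((\<lambda>t. - (sin p * sin t)) has_real_derivative - (sin p * cos t)) (at t)"
        by (auto intro!: derivative_eq_intros)
      from DERIV_mult[OF this has_real_derivative_spherical_polar[OF assms, of p t]] show ?thesis
        unfolding At_def F_def Fx_def Fy_def Fz_def
        by (rule has_field_derivative_at_within)
    qed
    show "((\<lambda>p. - (cos t * cos p) * F p t) has_real_derivative Bp p t) (at p within {0..2*pi})" for p t
    proof -
      have "((\<lambda>p. - (cos t * cos p)) has_real_derivative cos t * sin p) (at p)"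
        by (auto intro!: derivative_eq_intros)
      from DERIV_mult[OF this has_real_derivative_spherical_azimuth[OF assms, of t p]] show ?thesis
        unfolding Bp_def F_def Fx_def Fy_def
        by (rule has_field_derivative_at_within)
    qed
  qed (auto simp: F_def)
  finally show ?thesis unfolding R_def .
qed

definition gibbs_weight :: "real \<Rightarrow> real \<Rightarrow> real \<Rightarrow> real \<Rightarrow> real \<Rightarrow> real \<Rightarrow> real" where
  "gibbs_weight m1 m2 m3 x y z = exp (m1 * x\<^sup>2 + m2 * y\<^sup>2 + m3 * z\<^sup>2)"

lemma continuous3_gibbs_weight [simp]: "continuous3 (gibbs_weight m1 m2 m3)"
  unfolding continuous3_def gibbs_weight_def split_beta' by (intro continuous_intros)

lemma has_continuous_partials_xy_gibbs:
  "has_continuous_partials (\<lambda>x y z. x * y * gibbs_weight m1 m2 m3 x y z)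
    (\<lambda>x y z. (y + 2 * m1 * x\<^sup>2 * y) * gibbs_weight m1 m2 m3 x y z)
    (\<lambda>x y z. (x + 2 * m2 * x * y\<^sup>2) * gibbs_weight m1 m2 m3 x y z)
    (\<lambda>x y z. 2 * m3 * x * y * z * gibbs_weight m1 m2 m3 x y z)"
  unfolding has_continuous_partials_def continuous3_def gibbs_weight_def split_beta'
  apply (intro conjI allI)
  subgoal
    by (rule has_derivative_eq_rhs, (rule derivative_eq_intros refl)+)
      (simp add: fun_eq_iff algebra_simps power2_eq_square)
  by (intro continuous_intros)+

lemma has_continuous_partials_yz_gibbs:
  "has_continuous_partials (\<lambda>x y z. y * z * gibbs_weight m1 m2 m3 x y z)
    (\<lambda>x y z. 2 * m1 * x * y * z * gibbs_weight m1 m2 m3 x y z)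
    (\<lambda>x y z. (z + 2 * m2 * y\<^sup>2 * z) * gibbs_weight m1 m2 m3 x y z)
    (\<lambda>x y z. (y + 2 * m3 * y * z\<^sup>2) * gibbs_weight m1 m2 m3 x y z)"
  unfolding has_continuous_partials_def continuous3_def gibbs_weight_def split_beta'
  apply (intro conjI allI)
  subgoal
    by (rule has_derivative_eq_rhs, (rule derivative_eq_intros refl)+)
      (simp add: fun_eq_iff algebra_simps power2_eq_square)
  by (intro continuous_intros)+

lemma sphere_integral_gibbs_xy:
  fixes m1 m2 m3 :: real
  defines "w \<equiv> gibbs_weight m1 m2 m3"
  shows "sphere_integral (\<lambda>x y z. x\<^sup>2 * w x y z) - sphere_integral (\<lambda>x y z. y\<^sup>2 * w x y z)
    = 2 * (m1 - m2) * sphere_integral (\<lambda>x y z. x\<^sup>2 * y\<^sup>2 * w x y z)"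
proof -
  have cont: "continuous3 (\<lambda>x y z. x\<^sup>2 * w x y z)" "continuous3 (\<lambda>x y z. y\<^sup>2 * w x y z)"
      "continuous3 (\<lambda>x y z. x\<^sup>2 * w x y z - y\<^sup>2 * w x y z)"
      "continuous3 (\<lambda>x y z. 2 * (m1 - m2) * (x\<^sup>2 * y\<^sup>2 * w x y z))"
    unfolding continuous3_def w_def gibbs_weight_def split_beta' by (intro continuous_intros)+
  have "0 = sphere_integral (\<lambda>x y z. x * ((x + 2 * m2 * x * y\<^sup>2) * w x y z) - y * ((y + 2 * m1 * x\<^sup>2 * y) * w x y z))"
    using sphere_integral_rotation_z_eq_0[OF has_continuous_partials_xy_gibbs] by (simp add: w_def)
  also have "(\<lambda>x y z. x * ((x + 2 * m2 * x * y\<^sup>2) * w x y z) - y * ((y + 2 * m1 * x\<^sup>2 * y) * w x y z))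
      = (\<lambda>x y z. (x\<^sup>2 * w x y z - y\<^sup>2 * w x y z) - 2 * (m1 - m2) * (x\<^sup>2 * y\<^sup>2 * w x y z))"
    by (simp add: fun_eq_iff algebra_simps power2_eq_square)
  also have "sphere_integral \<dots> = sphere_integral (\<lambda>x y z. x\<^sup>2 * w x y z) - sphere_integral (\<lambda>x y z. y\<^sup>2 * w x y z)
      - 2 * (m1 - m2) * sphere_integral (\<lambda>x y z. x\<^sup>2 * y\<^sup>2 * w x y z)"
    by (simp only: sphere_integral_diff[OF cont(3,4)] sphere_integral_diff[OF cont(1,2)] sphere_integral_cmult)
  finally show ?thesis
    by linarith
qed

lemma sphere_integral_gibbs_yz:
  fixes m1 m2 m3 :: real
  defines "w \<equiv> gibbs_weight m1 m2 m3"
  shows "sphere_integral (\<lambda>x y z. y\<^sup>2 * w x y z) - sphere_integral (\<lambda>x y z. z\<^sup>2 * w x y z)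
    = 2 * (m2 - m3) * sphere_integral (\<lambda>x y z. y\<^sup>2 * z\<^sup>2 * w x y z)"
proof -
  have cont: "continuous3 (\<lambda>x y z. y\<^sup>2 * w x y z)" "continuous3 (\<lambda>x y z. z\<^sup>2 * w x y z)"
      "continuous3 (\<lambda>x y z. y\<^sup>2 * w x y z - z\<^sup>2 * w x y z)"
      "continuous3 (\<lambda>x y z. 2 * (m2 - m3) * (y\<^sup>2 * z\<^sup>2 * w x y z))"
    unfolding continuous3_def w_def gibbs_weight_def split_beta' by (intro continuous_intros)+
  have "0 = sphere_integral (\<lambda>x y z. y * ((y + 2 * m3 * y * z\<^sup>2) * w x y z) - z * ((z + 2 * m2 * y\<^sup>2 * z) * w x y z))"
    using sphere_integral_rotation_x_eq_0[OF has_continuous_partials_yz_gibbs] by (simp add: w_def)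
  also have "(\<lambda>x y z. y * ((y + 2 * m3 * y * z\<^sup>2) * w x y z) - z * ((z + 2 * m2 * y\<^sup>2 * z) * w x y z))
      = (\<lambda>x y z. (y\<^sup>2 * w x y z - z\<^sup>2 * w x y z) - 2 * (m2 - m3) * (y\<^sup>2 * z\<^sup>2 * w x y z))"
    by (simp add: fun_eq_iff algebra_simps power2_eq_square)
  also have "sphere_integral \<dots> = sphere_integral (\<lambda>x y z. y\<^sup>2 * w x y z) - sphere_integral (\<lambda>x y z. z\<^sup>2 * w x y z)
      - 2 * (m2 - m3) * sphere_integral (\<lambda>x y z. y\<^sup>2 * z\<^sup>2 * w x y z)"
    by (simp only: sphere_integral_diff[OF cont(3,4)] sphere_integral_diff[OF cont(1,2)] sphere_integral_cmult)
  finally show ?thesis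
    by linarith
qed

lemma partition_Z_pos: "0 < partition_Z m1 m2 m3"
proof -
  have "0 < sphere_integral (gibbs_weight m1 m2 m3)"
    by (rule sphere_integral_pos[where p = 0 and t = "pi/2"]) (auto simp: gibbs_weight_def)
  then show ?thesis
    by (simp add: partition_Z_def gibbs_weight_def [abs_def])
qed

lemma sphere_integral_mult_rhoQ:
  "sphere_integral (\<lambda>x y z. g x y z * rhoQ m1 m2 m3 x y z)
    = sphere_integral (\<lambda>x y z. g x y z * gibbs_weight m1 m2 m3 x y z) / partition_Z m1 m2 m3"
  using sphere_integral_cmult[of "inverse (partition_Z m1 m2 m3)" "\<lambda>x y z. g x y z * gibbs_weight m1 m2 m3 x y z"]
  by (simp add: rhoQ_def gibbs_weight_def field_simps)

lemma rhoQ_moment_difference_xy: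
  obtains k where "0 < k"
    "sphere_integral (\<lambda>x y z. x\<^sup>2 * rhoQ m1 m2 m3 x y z) - sphere_integral (\<lambda>x y z. y\<^sup>2 * rhoQ m1 m2 m3 x y z)
      = k * (m1 - m2)"
proof
  let ?P = "sphere_integral (\<lambda>x y z. x\<^sup>2 * y\<^sup>2 * gibbs_weight m1 m2 m3 x y z)"
  have "0 < ?P"
    by (rule sphere_integral_pos[where p = "pi/4" and t = "pi/2"])
      (auto simp: continuous3_def gibbs_weight_def split_beta' cos_45 sin_45 intro!: continuous_intros)
  then show "0 < 2 * ?P / partition_Z m1 m2 m3"
    using partition_Z_pos by simp
  show "sphere_integral (\<lambda>x y z. x\<^sup>2 * rhoQ m1 m2 m3 x y z) - sphere_integral (\<lambda>x y z. y\<^sup>2 * rhoQ m1 m2 m3 x y z)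
      = 2 * ?P / partition_Z m1 m2 m3 * (m1 - m2)"
    using sphere_integral_gibbs_xy[of m1 m2 m3]
    by (simp add: sphere_integral_mult_rhoQ[of "\<lambda>x y z. x\<^sup>2"] sphere_integral_mult_rhoQ[of "\<lambda>x y z. y\<^sup>2"]
        diff_divide_distrib[symmetric] mult_ac)
qed

lemma rhoQ_moment_difference_yz:
  obtains k where "0 < k"
    "sphere_integral (\<lambda>x y z. y\<^sup>2 * rhoQ m1 m2 m3 x y z) - sphere_integral (\<lambda>x y z. z\<^sup>2 * rhoQ m1 m2 m3 x y z)
      = k * (m2 - m3)"
proof
  let ?P = "sphere_integral (\<lambda>x y z. y\<^sup>2 * z\<^sup>2 * gibbs_weight m1 m2 m3 x y z)"
  have "0 < ?P"
    by (rule sphere_integral_pos[where p = "pi/2" and t = "pi/4"])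
      (auto simp: continuous3_def gibbs_weight_def split_beta' cos_45 sin_45 intro!: continuous_intros)
  then show "0 < 2 * ?P / partition_Z m1 m2 m3"
    using partition_Z_pos by simp
  show "sphere_integral (\<lambda>x y z. y\<^sup>2 * rhoQ m1 m2 m3 x y z) - sphere_integral (\<lambda>x y z. z\<^sup>2 * rhoQ m1 m2 m3 x y z)
      = 2 * ?P / partition_Z m1 m2 m3 * (m2 - m3)"
    using sphere_integral_gibbs_yz[of m1 m2 m3]
    by (simp add: sphere_integral_mult_rhoQ[of "\<lambda>x y z. y\<^sup>2"] sphere_integral_mult_rhoQ[of "\<lambda>x y z. z\<^sup>2"]
        diff_divide_distrib[symmetric] mult_ac)
qed

theorem lemma2p1:
  fixes l1 l2 l3 m1 m2 m3 :: real
  assumes "-1/3 < l1" and "l1 \<le> l2" and "l2 \<le> l3" and "l3 < 2/3"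
    and "l1 + l2 + l3 = 0"
    and "m1 + m2 + m3 = 0"
    and "sphere_integral (\<lambda>x y z. x^2 * rhoQ m1 m2 m3 x y z) = l1 + 1/3"
    and "sphere_integral (\<lambda>x y z. y^2 * rhoQ m1 m2 m3 x y z) = l2 + 1/3"
    and "sphere_integral (\<lambda>x y z. z^2 * rhoQ m1 m2 m3 x y z) = l3 + 1/3"
  shows "m1 \<le> m2 \<and> m2 \<le> m3
    \<and> (l1 = l2 \<longrightarrow> m1 = m2) \<and> (l1 = l3 \<longrightarrow> m1 = m3) \<and> (l2 = l3 \<longrightarrow> m2 = m3)"
proof -
  obtain k12 where "0 < k12" "l1 - l2 = k12 * (m1 - m2)"
    using rhoQ_moment_difference_xy[of m1 m2 m3] assms(7,8) by auto
  then have m12: "m1 - m2 = (l1 - l2) / k12"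
    by (simp add: field_simps)
  obtain k23 where "0 < k23" "l2 - l3 = k23 * (m2 - m3)"
    using rhoQ_moment_difference_yz[of m1 m2 m3] assms(8,9) by auto
  then have m23: "m2 - m3 = (l2 - l3) / k23"
    by (simp add: field_simps)
  have "(l1 - l2) / k12 \<le> 0" "(l2 - l3) / k23 \<le> 0"
    using assms(2,3) \<open>0 < k12\<close> \<open>0 < k23\<close> by (simp_all add: divide_nonpos_pos)
  then show ?thesis
    using m12 m23 assms(2,3) by auto
qed

end
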